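(* Let $(E_-,E_0,E_+)$ be an object of $\mathcal{A}_2$. Then $E_0=\delta_-(E_-)\oplus\ker\gamma_-=\delta_+(E_+)\oplus\ker\gamma_+=\delta_+(E_+)\oplus\ker\gamma_-=\delta_-(E_-)\oplus\ker\gamma_+$ (internal direct sums), so $(E_0,\delta_-(E_-),\delta_+(E_+),\ker\gamma_-,\ker\gamma_+)$ is an object of $\mathcal{C}$. Moreover, if $(e_-,e_0,e_+)$ is a morphism in $\mathcal{A}_2$ from $(E_-,E_0,E_+)$ to $(F_-,F_0,F_+)$ (with structure maps $\eta_\pm,\xi_\pm$), then $e_0(\delta_\pm(E_\pm))\subseteq\eta_\pm(F_\pm)$ and $e_0(\ker\gamma_\pm)\subseteq\ker\xi_\pm$, so $e_0$ is a morphism in $\mathcal{C}$. Consequently $T:\mathcal{A}_2\to\mathcal{C}$, $T(E)=(E_0,\delta_-(E_-),\delta_+(E_+),\ker\gamma_-,\ker\gamma_+)$, $T(e_-,e_0,e_+)=e_0$, is a well-defined functor.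
   Context: Fix a field $\mathbf{k}$. Category $\mathcal{A}_2$: objects are $(E_-,E_0,E_+)$ with vector spaces $E_-,E_0,E_+$ and linear maps $\delta_-:E_-\to E_0$, $\gamma_-:E_0\to E_-$, $\delta_+:E_+\to E_0$, $\gamma_+:E_0\to E_+$ such that $\gamma_+\delta_+=1_{E_+}$, $\gamma_-\delta_-=1_{E_-}$, and $\gamma_-\delta_+:E_+\to E_-$, $\gamma_+\delta_-:E_-\to E_+$ are isomorphisms. A morphism to $(F_-,F_0,F_+)$ (maps $\eta_\pm:F_\pm\to F_0$, $\xi_\pm:F_0\to F_\pm$) is a triple of linear maps $(e_-,e_0,e_+)$ with $e_0\delta_\pm=\eta_\pm e_\pm$ and $\xi_\pm e_0=e_\pm\gamma_\pm$. Category $\mathcal{C}$: objects are tuples $(V,A_1,A_2,B_1,B_2)$ with $V$ a vector space and subspaces $A_1,A_2,B_1,B_2\subseteq V$ such that $V=A_i\oplus B_j$ (internal direct sum) for all $i,j\in\{1,2\}$; morphisms $(V,A,B)\to(W,X,Y)$ are linear maps $\varphi$ with $\varphi(A_i)\subseteq X_i$, $\varphi(B_i)\subseteq Y_i$. *)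

theory Defs
  imports Complex_Main
begin

text \<open>Vector spaces over a field 'k are modelled as types 'v :: ab_group_add together with a
scalar multiplication s :: 'k \<Rightarrow> 'v \<Rightarrow> 'v satisfying the vector_space axioms; the whole
vector space is UNIV of that type.\<close>

definition idsum :: "'v::ab_group_add set \<Rightarrow> 'v set \<Rightarrow> 'v set \<Rightarrow> bool" where
  "idsum V A B \<longleftrightarrow> A \<inter> B = {0} \<and> V = {a + b | a b. a \<in> A \<and> b \<in> B}"

definition objA2 ::
  "('k::field \<Rightarrow> 'm::ab_group_add \<Rightarrow> 'm) \<Rightarrow> ('k \<Rightarrow> 'z::ab_group_add \<Rightarrow> 'z) \<Rightarrow> ('k \<Rightarrow> 'p::ab_group_add \<Rightarrow> 'p)
   \<Rightarrow> ('m \<Rightarrow> 'z) \<Rightarrow> ('z \<Rightarrow> 'm) \<Rightarrow> ('p \<Rightarrow> 'z) \<Rightarrow> ('z \<Rightarrow> 'p) \<Rightarrow> bool" where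
  "objA2 sm s0 sp dm gm dp gp \<longleftrightarrow>
     vector_space sm \<and> vector_space s0 \<and> vector_space sp \<and>
     Vector_Spaces.linear sm s0 dm \<and> Vector_Spaces.linear s0 sm gm \<and>
     Vector_Spaces.linear sp s0 dp \<and> Vector_Spaces.linear s0 sp gp \<and>
     gp \<circ> dp = id \<and> gm \<circ> dm = id \<and>
     bij (gm \<circ> dp) \<and> bij (gp \<circ> dm)"

definition morA2 ::
  "('k::field \<Rightarrow> 'm::ab_group_add \<Rightarrow> 'm) \<Rightarrow> ('k \<Rightarrow> 'z::ab_group_add \<Rightarrow> 'z) \<Rightarrow> ('k \<Rightarrow> 'p::ab_group_add \<Rightarrow> 'p)
   \<Rightarrow> ('m \<Rightarrow> 'z) \<Rightarrow> ('z \<Rightarrow> 'm) \<Rightarrow> ('p \<Rightarrow> 'z) \<Rightarrow> ('z \<Rightarrow> 'p)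
   \<Rightarrow> ('k \<Rightarrow> 'm2::ab_group_add \<Rightarrow> 'm2) \<Rightarrow> ('k \<Rightarrow> 'z2::ab_group_add \<Rightarrow> 'z2) \<Rightarrow> ('k \<Rightarrow> 'p2::ab_group_add \<Rightarrow> 'p2)
   \<Rightarrow> ('m2 \<Rightarrow> 'z2) \<Rightarrow> ('z2 \<Rightarrow> 'm2) \<Rightarrow> ('p2 \<Rightarrow> 'z2) \<Rightarrow> ('z2 \<Rightarrow> 'p2)
   \<Rightarrow> ('m \<Rightarrow> 'm2) \<Rightarrow> ('z \<Rightarrow> 'z2) \<Rightarrow> ('p \<Rightarrow> 'p2) \<Rightarrow> bool" where
  "morA2 sm s0 sp dm gm dp gp tm t0 tp em xm ep xp fm f0 fp \<longleftrightarrow>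
     Vector_Spaces.linear sm tm fm \<and> Vector_Spaces.linear s0 t0 f0 \<and> Vector_Spaces.linear sp tp fp \<and>
     f0 \<circ> dm = em \<circ> fm \<and> f0 \<circ> dp = ep \<circ> fp \<and>
     xm \<circ> f0 = fm \<circ> gm \<and> xp \<circ> f0 = fp \<circ> gp"

definition objC :: "('k::field \<Rightarrow> 'v::ab_group_add \<Rightarrow> 'v) \<Rightarrow> 'v set \<Rightarrow> 'v set \<Rightarrow> 'v set \<Rightarrow> 'v set \<Rightarrow> bool" where
  "objC s A1 A2 B1 B2 \<longleftrightarrow> vector_space s \<and>
     module.subspace s A1 \<and> module.subspace s A2 \<and> module.subspace s B1 \<and> module.subspace s B2 \<and>
     idsum UNIV A1 B1 \<and> idsum UNIV A1 B2 \<and> idsum UNIV A2 B1 \<and> idsum UNIV A2 B2"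

definition morC :: "('k::field \<Rightarrow> 'v::ab_group_add \<Rightarrow> 'v) \<Rightarrow> 'v set \<Rightarrow> 'v set \<Rightarrow> 'v set \<Rightarrow> 'v set
   \<Rightarrow> ('k \<Rightarrow> 'w::ab_group_add \<Rightarrow> 'w) \<Rightarrow> 'w set \<Rightarrow> 'w set \<Rightarrow> 'w set \<Rightarrow> 'w set \<Rightarrow> ('v \<Rightarrow> 'w) \<Rightarrow> bool" where
  "morC s A1 A2 B1 B2 t X1 X2 Y1 Y2 \<phi> \<longleftrightarrow> Vector_Spaces.linear s t \<phi> \<and>
     \<phi> ` A1 \<subseteq> X1 \<and> \<phi> ` A2 \<subseteq> X2 \<and> \<phi> ` B1 \<subseteq> Y1 \<and> \<phi> ` B2 \<subseteq> Y2"

definition ker :: "('a \<Rightarrow> 'b::zero) \<Rightarrow> 'a set" where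
  "ker f = {x. f x = 0}"

end

theory Submission
  imports Defs
begin

text \<open>If \<open>g \<circ> d\<close> is bijective, every \<open>x\<close> splits as \<open>d u + (x - d u)\<close> with \<open>u\<close> the preimage
  of \<open>g x\<close> under \<open>g \<circ> d\<close>, and injectivity of \<open>g \<circ> d\<close> makes the sum direct. The four
  decompositions of \<open>E\<^sub>0\<close> come from the bijections \<open>\<gamma>\<^sub>\<pm> \<circ> \<delta>\<^sub>\<pm>\<close> and \<open>\<gamma>\<^sub>\<mp> \<circ> \<delta>\<^sub>\<pm>\<close>.\<close>

lemma idsum_range_ker:
  fixes d :: "'a::ab_group_add \<Rightarrow> 'z::ab_group_add" and g :: "'z \<Rightarrow> 'b::ab_group_add"
  assumes d: "Vector_Spaces.linear s1 s0 d" and g: "Vector_Spaces.linear s0 s2 g"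
    and bij: "bij (g \<circ> d)"
  shows "idsum UNIV (range d) (ker g)"
proof -
  interpret d: module_hom s1 s0 d using d by (simp add: module_hom_iff_linear)
  interpret g: module_hom s0 s2 g using g by (simp add: module_hom_iff_linear)
  have "range d \<inter> ker g \<subseteq> {0}"
  proof
    fix x assume "x \<in> range d \<inter> ker g"
    then obtain y where x: "x = d y" and "(g \<circ> d) y = (g \<circ> d) 0" by (auto simp: ker_def)
    then have "y = 0" using bij_is_inj[OF bij] by (meson injD)
    then show "x \<in> {0}" using x by simp
  qed
  moreover have "x \<in> {a + b | a b. a \<in> range d \<and> b \<in> ker g}" for x
  proof -
    obtain u where "(g \<circ> d) u = g x" using bij_is_surj[OF bij] by (metis surjD)
    then have "x - d u \<in> ker g" by (simp add: ker_def g.diff)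
    moreover have "x = d u + (x - d u)" by simp
    ultimately show ?thesis by blast
  qed
  moreover have "0 \<in> range d \<inter> ker g"
    by (simp add: ker_def) (metis d.zero rangeI)
  ultimately show ?thesis unfolding idsum_def by blast
qed

lemma linear_subspace_range:
  "Vector_Spaces.linear s1 s2 f \<Longrightarrow> module.subspace s2 (range f)"
  by (simp add: module_hom.subspace_image module.subspace_UNIV module_hom.axioms(1)
      flip: module_hom_iff_linear)

lemma linear_subspace_ker:
  "Vector_Spaces.linear s1 s2 f \<Longrightarrow> module.subspace s1 (ker f)"
  unfolding ker_def by (simp add: module_hom.subspace_kernel flip: module_hom_iff_linear)

lemma image_range_subset_range: "f \<circ> d = e \<circ> h \<Longrightarrow> f ` range d \<subseteq> range e"
  by (metis image_comp image_subset_iff rangeI)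

lemma image_ker_subset_ker: "\<xi> \<circ> f = h \<circ> g \<Longrightarrow> h 0 = 0 \<Longrightarrow> f ` ker g \<subseteq> ker \<xi>"
  unfolding ker_def by (auto simp: fun_eq_iff)

lemma objA2_objC:
  assumes "objA2 sm s0 sp dm gm dp gp"
  shows "idsum UNIV (range dm) (ker gm)" "idsum UNIV (range dp) (ker gp)"
    and "idsum UNIV (range dp) (ker gm)" "idsum UNIV (range dm) (ker gp)"
    and "objC s0 (range dm) (range dp) (ker gm) (ker gp)"
proof -
  have lin: "Vector_Spaces.linear sm s0 dm" "Vector_Spaces.linear s0 sm gm"
    "Vector_Spaces.linear sp s0 dp" "Vector_Spaces.linear s0 sp gp"
    and bij: "bij (gm \<circ> dm)" "bij (gp \<circ> dp)" "bij (gm \<circ> dp)" "bij (gp \<circ> dm)"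
    using assms by (simp_all add: objA2_def)
  show sums: "idsum UNIV (range dm) (ker gm)" "idsum UNIV (range dp) (ker gp)"
    "idsum UNIV (range dp) (ker gm)" "idsum UNIV (range dm) (ker gp)"
    using idsum_range_ker lin bij by blast+
  show "objC s0 (range dm) (range dp) (ker gm) (ker gp)"
    using assms sums linear_subspace_range[OF lin(1)] linear_subspace_range[OF lin(3)]
      linear_subspace_ker[OF lin(2)] linear_subspace_ker[OF lin(4)]
    by (simp add: objC_def objA2_def)
qed

lemma morA2_morC:
  assumes "morA2 sm s0 sp dm gm dp gp tm t0 tp em xm ep xp fm f0 fp"
  shows "f0 ` range dm \<subseteq> range em" "f0 ` range dp \<subseteq> range ep"
    and "f0 ` ker gm \<subseteq> ker xm" "f0 ` ker gp \<subseteq> ker xp"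
    and "morC s0 (range dm) (range dp) (ker gm) (ker gp) t0 (range em) (range ep) (ker xm) (ker xp) f0"
proof -
  have lin: "Vector_Spaces.linear sm tm fm" "Vector_Spaces.linear sp tp fp"
    and comm: "f0 \<circ> dm = em \<circ> fm" "f0 \<circ> dp = ep \<circ> fp"
      "xm \<circ> f0 = fm \<circ> gm" "xp \<circ> f0 = fp \<circ> gp"
    using assms by (simp_all add: morA2_def)
  have "fm 0 = 0" "fp 0 = 0"
    using lin by (simp_all add: module_hom.zero flip: module_hom_iff_linear)
  then show images: "f0 ` range dm \<subseteq> range em" "f0 ` range dp \<subseteq> range ep"
    "f0 ` ker gm \<subseteq> ker xm" "f0 ` ker gp \<subseteq> ker xp"
    using comm by (simp_all add: image_range_subset_range image_ker_subset_ker)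
  show "morC s0 (range dm) (range dp) (ker gm) (ker gp) t0 (range em) (range ep) (ker xm) (ker xp) f0"
    using assms images by (simp add: morC_def morA2_def)
qed

theorem mainTheorem4:
  fixes sm :: "'k::field \<Rightarrow> 'm::ab_group_add \<Rightarrow> 'm" and s0 :: "'k \<Rightarrow> 'z::ab_group_add \<Rightarrow> 'z"
    and sp :: "'k \<Rightarrow> 'p::ab_group_add \<Rightarrow> 'p"
    and dm :: "'m \<Rightarrow> 'z" and gm :: "'z \<Rightarrow> 'm" and dp :: "'p \<Rightarrow> 'z" and gp :: "'z \<Rightarrow> 'p"
  assumes "objA2 sm s0 sp dm gm dp gp"
  shows "idsum UNIV (range dm) (ker gm) \<and> idsum UNIV (range dp) (ker gp) \<and>
         idsum UNIV (range dp) (ker gm) \<and> idsum UNIV (range dm) (ker gp) \<and>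
         objC s0 (range dm) (range dp) (ker gm) (ker gp) \<and>
         (\<forall> (tm :: 'k \<Rightarrow> 'm2::ab_group_add \<Rightarrow> 'm2) (t0 :: 'k \<Rightarrow> 'z2::ab_group_add \<Rightarrow> 'z2)
            (tp :: 'k \<Rightarrow> 'p2::ab_group_add \<Rightarrow> 'p2) em xm ep xp fm f0 fp.
            objA2 tm t0 tp em xm ep xp \<longrightarrow>
            morA2 sm s0 sp dm gm dp gp tm t0 tp em xm ep xp fm f0 fp \<longrightarrow>
            f0 ` range dm \<subseteq> range em \<and> f0 ` range dp \<subseteq> range ep \<and>
            f0 ` ker gm \<subseteq> ker xm \<and> f0 ` ker gp \<subseteq> ker xp \<and>
            morC s0 (range dm) (range dp) (ker gm) (ker gp)
                 t0 (range em) (range ep) (ker xm) (ker xp) f0)"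
proof (intro conjI allI impI objA2_objC[OF assms])
  fix tm :: "'k \<Rightarrow> 'm2::ab_group_add \<Rightarrow> 'm2" and t0 :: "'k \<Rightarrow> 'z2::ab_group_add \<Rightarrow> 'z2"
    and tp :: "'k \<Rightarrow> 'p2::ab_group_add \<Rightarrow> 'p2" and em xm ep xp fm f0 fp
  assume "morA2 sm s0 sp dm gm dp gp tm t0 tp em xm ep xp fm f0 fp"
  then show "f0 ` range dm \<subseteq> range em" "f0 ` range dp \<subseteq> range ep"
    "f0 ` ker gm \<subseteq> ker xm" "f0 ` ker gp \<subseteq> ker xp"
    "morC s0 (range dm) (range dp) (ker gm) (ker gp) t0 (range em) (range ep) (ker xm) (ker xp) f0"
    by (fact morA2_morC)+
qed

end
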